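(* The subdivision map $\omega:\Xi\to\Xi$, $\omega([(L,v)])=[(\omega(L),v)]$, is injective.
   Context: Combinatorial tiling: 2-dimensional CW-complex homeomorphic to the open unit disk. Decorated subdivision: a decorated pentagon has boundary vertices $v_1,\dots,v_5$ in cyclic order (indices mod 5), corner $v_i$ labelled $i$; $\omega$ adds $m_i$ inside edge $v_iv_{i+1}$, interior vertices $c_1,\dots,c_5$, edges $c_ic_{i+1}$, $c_im_i$, and replaces the face by the central pentagon $c_1\cdots c_5$ (label $i+1$ at $c_i$) and petals $v_i\,m_i\,c_i\,c_{i-1}\,m_{i-1}$ labelled $i,i+1,i+2,i+3,i+4$ (mod 5). $K_0$ is one decorated pentagon, $K_n=\omega^n(K_0)$ embeds label-preservingly onto the central superpentagon $\omega^n(\text{central face of }\omega(K_0))$ of $K_{n+1}$, and $K$ is the direct limit. Isomorphisms are cell-preserving bijections preserving labels. A patch is a finite subcomplex that is a union of faces connected through chains of faces sharing edges. $L$ is locally isomorphic to $K$ if every patch of $L$ is isomorphic to a patch of $K$. $\Xi$ is the set of isomorphism classes $[(L,v)]$ with $L$ locally isomorphic to $K$ and $v$ a vertex of $L$. For such $L$, $\omega(L)$ is obtained by applying $\omega$ to every face of $L$; it is again locally isomorphic to $K$, and each vertex $v$ of $L$ is a vertex of $\omega(L)$. *)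

theory Defs
  imports "HOL-Analysis.Analysis" "HOL-Library.FSet"
begin

datatype lab = l1 | l2 | l3 | l4 | l5

fun nxt :: "lab \<Rightarrow> lab" where
  "nxt l1 = l2" | "nxt l2 = l3" | "nxt l3 = l4" | "nxt l4 = l5" | "nxt l5 = l1"

fun prv :: "lab \<Rightarrow> lab" where
  "prv l1 = l5" | "prv l2 = l1" | "prv l3 = l2" | "prv l4 = l3" | "prv l5 = l4"

fun lab_idx :: "lab \<Rightarrow> nat" where
  "lab_idx l1 = 1" | "lab_idx l2 = 2" | "lab_idx l3 = 3" | "lab_idx l4 = 4" | "lab_idx l5 = 5"

text \<open>A decorated pentagonal face is given by its labelled corners: f i is the corner
  with label i; the boundary cycle is f l1, f l2, ..., f l5 (edges between cyclically
  consecutive labels). A complex is represented by its set of faces; its vertices and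
  edges are those of its faces.\<close>

type_synonym 'v face = "lab \<Rightarrow> 'v"

definition verts :: "'v face set \<Rightarrow> 'v set" where
  "verts F = (\<Union>f\<in>F. range f)"

definition edge :: "'v face \<Rightarrow> lab \<Rightarrow> 'v set" where
  "edge f i = {f i, f (nxt i)}"

definition corner :: "lab \<Rightarrow> complex" where
  "corner i = cis (2 * pi * real (lab_idx i) / 5)"

definition pent :: "complex set" where
  "pent = convex hull (range corner)"

text \<open>A realization: every face f is the image of the standard closed pentagon under an
  embedding psi f sending corner i to the point of vertex f i; shared edges have the same
  image arc; open cells (vertices, open edges, open faces) are pairwise disjoint; the
  space is locally finite (so the subspace topology is the CW topology) and homeomorphic
  to the open unit disk.\<close>

definition tiling :: "'v face set \<Rightarrow> bool" where
  "tiling L \<longleftrightarrow> (\<exists>(pos :: 'v \<Rightarrow> complex) (\<psi> :: 'v face \<Rightarrow> complex \<Rightarrow> complex).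
     inj_on pos (verts L) \<and>
     (\<forall>f\<in>L. continuous_on pent (\<psi> f) \<and> inj_on (\<psi> f) pent \<and>
              (\<forall>i. \<psi> f (corner i) = pos (f i))) \<and>
     (\<forall>f\<in>L. \<forall>g\<in>L. \<forall>i j. edge f i = edge g j \<longrightarrow>
        \<psi> f ` closed_segment (corner i) (corner (nxt i)) =
        \<psi> g ` closed_segment (corner j) (corner (nxt j))) \<and>
     (\<forall>f\<in>L. \<forall>g\<in>L. \<forall>i j. edge f i \<noteq> edge g j \<longrightarrow>
        \<psi> f ` open_segment (corner i) (corner (nxt i)) \<inter>
        \<psi> g ` closed_segment (corner j) (corner (nxt j)) = {}) \<and>
     (\<forall>f\<in>L. \<forall>g\<in>L. f \<noteq> g \<longrightarrow> \<psi> f ` interior pent \<inter> \<psi> g ` pent = {}) \<and>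
     ((\<Union>f\<in>L. \<psi> f ` pent) homeomorphic ball (0::complex) 1) \<and>
     (\<forall>x\<in>(\<Union>f\<in>L. \<psi> f ` pent). \<exists>e>0. finite {f\<in>L. \<psi> f ` pent \<inter> ball x e \<noteq> {}}))"

text \<open>Generic form, with naming functions for old vertices, edge midpoints m_i and centre
  vertices c_i. Central pentagon: c_i carries label i+1. Petal i: v_i, m_i, c_i, c_(i-1),
  m_(i-1) carry labels i, i+1, i+2, i+3, i+4.\<close>

definition petal :: "('v \<Rightarrow> 'w) \<Rightarrow> ('v set \<Rightarrow> 'w) \<Rightarrow> ('v face \<Rightarrow> lab \<Rightarrow> 'w)
    \<Rightarrow> 'v face \<Rightarrow> lab \<Rightarrow> 'w face" where
  "petal old mid cen f i = (\<lambda>j.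
     if j = i then old (f i)
     else if j = nxt i then mid (edge f i)
     else if j = nxt (nxt i) then cen f i
     else if j = nxt (nxt (nxt i)) then cen f (prv i)
     else mid (edge f (prv i)))"

definition omega_face_gen :: "('v \<Rightarrow> 'w) \<Rightarrow> ('v set \<Rightarrow> 'w) \<Rightarrow> ('v face \<Rightarrow> lab \<Rightarrow> 'w)
    \<Rightarrow> 'v face \<Rightarrow> 'w face set" where
  "omega_face_gen old mid cen f =
     insert (\<lambda>j. cen f (prv j)) (range (petal old mid cen f))"

definition omega_gen :: "('v \<Rightarrow> 'w) \<Rightarrow> ('v set \<Rightarrow> 'w) \<Rightarrow> ('v face \<Rightarrow> lab \<Rightarrow> 'w)
    \<Rightarrow> 'v face set \<Rightarrow> 'w face set" where
  "omega_gen old mid cen L = (\<Union>f\<in>L. omega_face_gen old mid cen f)"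

text \<open>Vertices of omega(L): old vertices (so each vertex v of L is the vertex Old v of
  omega(L)), midpoints of edges, and centre vertices of faces.\<close>

datatype 'v svert = Old 'v | Mid "'v set" | Cen "'v face" lab

definition omega :: "'v face set \<Rightarrow> 'v svert face set" where
  "omega L = omega_gen Old Mid Cen L"

section \<open>The tiling K as a direct limit\<close>

datatype uv = U0 lab | UOld uv | UMid "uv fset" | UCen "lab \<Rightarrow> uv" lab

primrec Kn :: "nat \<Rightarrow> uv face set" where
  "Kn 0 = {U0}"
| "Kn (Suc n) = omega_gen UOld (\<lambda>e. UMid (Abs_fset e)) UCen (Kn n)"

text \<open>The label-preserving embedding K_n -> K_(n+1) onto omega^n(central face of omega(K_0)).\<close>

primrec emb :: "uv \<Rightarrow> uv" where
  "emb (U0 j) = UCen U0 (prv j)"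
| "emb (UOld x) = UOld (emb x)"
| "emb (UMid s) = UMid (fimage emb s)"
| "emb (UCen f i) = UCen (emb \<circ> f) i"

definition lim_cls :: "nat \<Rightarrow> uv \<Rightarrow> (nat \<times> uv) set" where
  "lim_cls n x = {(m, y). \<exists>k. (emb ^^ (k + m)) x = (emb ^^ (k + n)) y}"

definition K :: "(nat \<times> uv) set face set" where
  "K = {lim_cls n \<circ> f | n f. f \<in> Kn n}"

definition iso :: "'a face set \<Rightarrow> 'b face set \<Rightarrow> bool" where
  "iso A B \<longleftrightarrow> (\<exists>\<phi>. bij_betw \<phi> (verts A) (verts B) \<and> (\<lambda>f. \<phi> \<circ> f) ` A = B)"

definition piso :: "'a face set \<Rightarrow> 'a \<Rightarrow> 'b face set \<Rightarrow> 'b \<Rightarrow> bool" where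
  "piso A v B w \<longleftrightarrow>
     (\<exists>\<phi>. bij_betw \<phi> (verts A) (verts B) \<and> (\<lambda>f. \<phi> \<circ> f) ` A = B \<and> \<phi> v = w)"

definition share_edge :: "'v face \<Rightarrow> 'v face \<Rightarrow> bool" where
  "share_edge f g \<longleftrightarrow> (\<exists>i j. edge f i = edge g j)"

definition patch :: "'v face set \<Rightarrow> 'v face set \<Rightarrow> bool" where
  "patch L P \<longleftrightarrow> P \<subseteq> L \<and> finite P \<and> P \<noteq> {} \<and>
     (\<forall>f\<in>P. \<forall>g\<in>P. (\<lambda>a b. a \<in> P \<and> b \<in> P \<and> share_edge a b)\<^sup>*\<^sup>* f g)"

definition loc_iso_K :: "'v face set \<Rightarrow> bool" where
  "loc_iso_K L \<longleftrightarrow> (\<forall>P. patch L P \<longrightarrow> (\<exists>Q. patch K Q \<and> iso P Q))"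

definition in_Xi :: "'v face set \<Rightarrow> 'v \<Rightarrow> bool" where
  "in_Xi L v \<longleftrightarrow> tiling L \<and> loc_iso_K L \<and> v \<in> verts L"

end

theory Submission
  imports Defs
begin

text \<open>
  A face of \<open>\<omega>(L')\<close> with an old vertex at its corner \<open>j\<close> must be petal \<open>j\<close> of a face
  of \<open>L'\<close>, and a face with the centre vertex \<open>c\<^sub>k\<close> at its corner \<open>k - 1\<close> must be petal
  \<open>k + 1\<close>. So if an isomorphism \<open>\<phi> : \<omega>(L) \<rightarrow> \<omega>(L')\<close> sends one old corner of a face \<open>f\<close>
  to an old vertex, walking once around the centre of \<open>f\<close> shows that \<open>\<phi>\<close> maps the five
  petals of \<open>f\<close> to the five petals of a face \<open>g\<close> of \<open>L'\<close>, hence the corners of \<open>f\<close> to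
  those of \<open>g\<close>. In a tiling any two faces are joined by a chain of faces sharing vertices
  (the union of the closed cells is a connected disk, and two cells that meet share a
  vertex), so starting from \<open>\<phi>(v) = v'\<close> this propagates to all of \<open>L\<close>: \<open>\<phi>\<close> restricts to
  a face map \<open>L \<rightarrow> L'\<close>, and the same applies to \<open>\<phi>\<^sup>-\<^sup>1\<close>.
\<close>

section \<open>Labels and the standard pentagon\<close>

lemma UNIV_lab: "(UNIV :: lab set) = {l1, l2, l3, l4, l5}"
  using lab.exhaust by auto

instance lab :: finite
  by standard (simp add: UNIV_lab)

lemma lab_nxt_induct [case_names start step]:
  assumes "P j" and "\<And>k. P k \<Longrightarrow> P (nxt k)"
  shows "P k"
proof -
  have "P (nxt j)" "P (nxt (nxt j))" "P (nxt (nxt (nxt j)))" "P (nxt (nxt (nxt (nxt j))))"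
    using assms by blast+
  then show ?thesis
    using assms(1) by (cases j; cases k) simp_all
qed

lemma lab_neq_cases:
  "p \<noteq> q \<Longrightarrow> q = nxt p \<or> p = nxt q \<or> q = nxt (nxt p) \<or> p = nxt (nxt q)"
  by (cases p; cases q) simp_all

definition zeta :: complex where
  "zeta = cis (2 * pi / 5)"

lemma corner_eq_zeta_power: "corner i = zeta ^ lab_idx i"
  unfolding corner_def zeta_def Complex.DeMoivre by (simp add: field_simps)

lemma zeta_pow_5: "zeta ^ 5 = 1"
  unfolding zeta_def Complex.DeMoivre by simp

lemma zeta_neq_1: "zeta \<noteq> 1"
proof
  assume "zeta = 1"
  moreover have "sin (2 * pi / 5) > 0"
    by (rule sin_gt_zero) auto
  ultimately show False
    by (simp add: zeta_def complex_eq_iff)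
qed

lemma corner_nxt: "corner (nxt i) = zeta * corner i"
proof (cases "i = l5")
  case True
  then show ?thesis
    by (simp add: corner_eq_zeta_power zeta_pow_5)
next
  case False
  then show ?thesis
    by (cases i) (simp_all add: corner_eq_zeta_power numeral_eq_Suc)
qed

lemma norm_corner [simp]: "norm (corner i) = 1"
  by (simp add: corner_def)

lemma corner_eq_iff [simp]: "corner i = corner j \<longleftrightarrow> i = j"
proof
  assume "corner i = corner j"
  then have "sin (2 * pi * lab_idx i / 5) = sin (2 * pi * lab_idx j / 5) \<and>
      cos (2 * pi * lab_idx i / 5) = cos (2 * pi * lab_idx j / 5)"
    by (simp add: corner_def complex_eq_iff)
  then obtain n :: int where "2 * pi * lab_idx i / 5 = 2 * pi * lab_idx j / 5 + 2 * pi * n"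
    using sin_cos_eq_iff by blast
  then have "pi * (2 * real (lab_idx i)) = pi * (2 * (real (lab_idx j) + 5 * n))"
    by (simp add: field_simps)
  then have "real (lab_idx i) = real (lab_idx j) + 5 * n"
    by simp
  then have "int (lab_idx i) = int (lab_idx j) + 5 * n"
    by linarith
  moreover have "lab_idx i \<in> {1..5}" "lab_idx j \<in> {1..5}"
    by (cases i; simp) (cases j; simp)
  ultimately have "lab_idx i = lab_idx j"
    by presburger
  then show "i = j"
    by (cases i; cases j) simp_all
qed simp

lemma sum_corners: "(\<Sum>i\<in>UNIV. corner i) = 0"
proof -
  have "(zeta - 1) * (\<Sum>i\<in>UNIV. corner i) = zeta * (zeta ^ 5 - 1)"
    by (simp add: UNIV_lab corner_eq_zeta_power algebra_simps numeral_eq_Suc)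
  then show ?thesis
    using zeta_neq_1 zeta_pow_5 by simp
qed

lemma corner_add_corner_nxt_nxt:
  "corner i + corner (nxt (nxt i)) = (2 * cos (2 * pi / 5)) *\<^sub>R corner (nxt i)"
proof -
  have "cnj zeta * zeta = 1"
    by (simp add: zeta_def complex_norm_square[symmetric] mult.commute)
  then have "corner i + corner (nxt (nxt i)) = (cnj zeta + zeta) * corner (nxt i)"
    by (simp add: corner_nxt algebra_simps)
  also have "cnj zeta + zeta = of_real (2 * cos (2 * pi / 5))"
    by (simp add: complex_eq_iff zeta_def)
  finally show ?thesis
    by (simp add: scaleR_conv_of_real)
qed

lemma convex_pent: "convex pent"
  by (simp add: pent_def)

lemma compact_pent: "compact pent"
  unfolding pent_def by (rule compact_convex_hull) (simp add: finite_imp_compact)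

lemma corner_in_pent: "corner i \<in> pent"
  by (simp add: pent_def hull_inc)

lemma pent_eq_convex_combinations:
  "pent = {y. \<exists>\<mu>. (\<forall>i. 0 \<le> \<mu> i) \<and> sum \<mu> UNIV = 1 \<and> (\<Sum>i\<in>UNIV. \<mu> i *\<^sub>R corner i) = y}"
proof -
  have reindex: "sum g (range corner) = sum (g \<circ> corner) UNIV" for g :: "complex \<Rightarrow> 'b::comm_monoid_add"
    by (simp add: sum.reindex inj_on_def)
  have inv: "inv corner (corner i) = i" for i
    by (simp add: inv_f_f inj_on_def)
  have "pent = {y. \<exists>u. (\<forall>x\<in>range corner. 0 \<le> u x) \<and> sum u (range corner) = 1 \<and>
      (\<Sum>x\<in>range corner. u x *\<^sub>R x) = y}"
    unfolding pent_def by (rule convex_hull_finite) simp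
  also have "\<dots> = {y. \<exists>\<mu>. (\<forall>i. 0 \<le> \<mu> i) \<and> sum \<mu> UNIV = 1 \<and> (\<Sum>i\<in>UNIV. \<mu> i *\<^sub>R corner i) = y}"
  proof (intro Collect_cong iffI; elim exE conjE)
    fix y u assume "\<forall>x\<in>range corner. 0 \<le> u x" "sum u (range corner) = 1"
      "(\<Sum>x\<in>range corner. u x *\<^sub>R x) = y"
    then show "\<exists>\<mu>. (\<forall>i. 0 \<le> \<mu> i) \<and> sum \<mu> UNIV = 1 \<and> (\<Sum>i\<in>UNIV. \<mu> i *\<^sub>R corner i) = y"
      by (intro exI[of _ "u \<circ> corner"]) (simp add: reindex o_def)
  next
    fix y \<mu> assume "\<forall>i. 0 \<le> \<mu> i" "sum \<mu> UNIV = 1" "(\<Sum>i\<in>UNIV. \<mu> i *\<^sub>R corner i) = y"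
    then show "\<exists>u. (\<forall>x\<in>range corner. 0 \<le> u x) \<and> sum u (range corner) = 1 \<and>
        (\<Sum>x\<in>range corner. u x *\<^sub>R x) = y"
      by (intro exI[of _ "\<mu> \<circ> inv corner"]) (simp add: reindex inv o_def)
  qed
  finally show ?thesis .
qed

lemma not_collinear_corners:
  assumes "p \<noteq> q" "p \<noteq> r" "q \<noteq> r"
  shows "\<not> collinear {corner p, corner q, corner r}"
proof
  assume "collinear {corner p, corner q, corner r}"
  then have "between (corner q, corner r) (corner p) \<or> between (corner r, corner p) (corner q) \<or>
      between (corner p, corner q) (corner r)"
    by (simp add: collinear_between_cases)
  then have "corner p \<in> open_segment (corner q) (corner r) \<or> corner q \<in> open_segment (corner r) (corner p) \<or>
      corner r \<in> open_segment (corner p) (corner q)"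
    using assms by (auto simp: between_mem_segment open_segment_def)
  then show False
    using different_norm_3_collinear_points norm_corner by metis
qed

lemma convex_combination_3_in_interior_pent:
  assumes "p \<noteq> q" "p \<noteq> r" "q \<noteq> r" "0 < a" "0 < b" "0 < c" "a + b + c = 1"
  shows "a *\<^sub>R corner p + b *\<^sub>R corner q + c *\<^sub>R corner r \<in> interior pent"
proof -
  have "a *\<^sub>R corner p + b *\<^sub>R corner q + c *\<^sub>R corner r \<in> interior (convex hull {corner p, corner q, corner r})"
    using assms by (auto simp: interior_convex_hull_3_minimal not_collinear_corners)
  moreover have "interior (convex hull {corner p, corner q, corner r}) \<subseteq> interior pent"
    unfolding pent_def by (intro interior_mono hull_mono) auto
  ultimately show ?thesis
    by blast
qed

lemma nonneg_combination_corners_eq_scaleR: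
  assumes "\<forall>i. 0 \<le> \<nu> i"
  obtains u where "u \<in> pent" "(\<Sum>i\<in>A. \<nu> i *\<^sub>R corner i) = sum \<nu> A *\<^sub>R u"
proof (cases "sum \<nu> A = 0")
  case True
  then have "\<forall>i\<in>A. \<nu> i = 0"
    using assms by (simp add: sum_nonneg_eq_0_iff)
  then show ?thesis
    using that[OF corner_in_pent] True by simp
next
  case False
  define \<mu> where "\<mu> i = (if i \<in> A then \<nu> i / sum \<nu> A else 0)" for i
  have "sum \<mu> UNIV = sum \<mu> A" "(\<Sum>i\<in>UNIV. \<mu> i *\<^sub>R corner i) = (\<Sum>i\<in>A. \<mu> i *\<^sub>R corner i)"
    by (simp_all add: \<mu>_def sum.If_cases if_distrib[of "\<lambda>t. t *\<^sub>R _"] cong: if_cong)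
  moreover have "sum \<mu> A = 1"
    using False by (simp add: \<mu>_def sum_divide_distrib[symmetric])
  moreover have "\<forall>i. 0 \<le> \<mu> i"
    using assms by (simp add: \<mu>_def sum_nonneg)
  ultimately have "(\<Sum>i\<in>A. \<mu> i *\<^sub>R corner i) \<in> pent"
    unfolding pent_eq_convex_combinations by auto
  moreover have "(\<Sum>i\<in>A. \<nu> i *\<^sub>R corner i) = sum \<nu> A *\<^sub>R (\<Sum>i\<in>A. \<mu> i *\<^sub>R corner i)"
    using False by (simp add: \<mu>_def scaleR_sum_right)
  ultimately show ?thesis
    using that by blast
qed

lemma convex_combination_in_interior_pent:
  assumes nonneg: "\<forall>i. 0 \<le> \<mu> i" and sum1: "sum \<mu> UNIV = 1"
    and distinct: "p \<noteq> q" "p \<noteq> r" "q \<noteq> r" and pos: "0 < \<mu> p" "0 < \<mu> q" "0 < \<mu> r"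
  shows "(\<Sum>i\<in>UNIV. \<mu> i *\<^sub>R corner i) \<in> interior pent"
proof -
  define s where "s = \<mu> p + \<mu> q + \<mu> r"
  define R where "R = UNIV - {p, q, r}"
  define T where "T = (\<mu> p / s) *\<^sub>R corner p + (\<mu> q / s) *\<^sub>R corner q + (\<mu> r / s) *\<^sub>R corner r"
  have split: "sum g UNIV = g p + g q + g r + sum g R" for g :: "lab \<Rightarrow> 'b::comm_monoid_add"
    using sum.subset_diff[of "{p, q, r}" UNIV g] distinct by (simp add: R_def add.commute add.left_commute)
  have "0 < s"
    using pos by (simp add: s_def)
  then have "T \<in> interior pent"
    unfolding T_def using distinct pos
    by (intro convex_combination_3_in_interior_pent) (simp_all add: s_def add_divide_distrib[symmetric])
  obtain u where u: "u \<in> pent" "(\<Sum>i\<in>R. \<mu> i *\<^sub>R corner i) = sum \<mu> R *\<^sub>R u"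
    using nonneg_combination_corners_eq_scaleR nonneg by blast
  have "sum \<mu> R = 1 - s"
    using sum1 split[of \<mu>] by (simp add: s_def)
  moreover have "s *\<^sub>R T = \<mu> p *\<^sub>R corner p + \<mu> q *\<^sub>R corner q + \<mu> r *\<^sub>R corner r"
    using \<open>0 < s\<close> by (simp add: T_def scaleR_add_right)
  ultimately have "(\<Sum>i\<in>UNIV. \<mu> i *\<^sub>R corner i) = s *\<^sub>R T + (1 - s) *\<^sub>R u"
    using split[of "\<lambda>i. \<mu> i *\<^sub>R corner i"] u(2) by simp
  then have "(\<Sum>i\<in>UNIV. \<mu> i *\<^sub>R corner i) = u - s *\<^sub>R (u - T)"
    by (simp add: algebra_simps)
  moreover have "s \<le> 1"
    using \<open>sum \<mu> R = 1 - s\<close> nonneg sum_nonneg[of R \<mu>] by simp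
  ultimately show ?thesis
    using mem_interior_convex_shrink[OF convex_pent \<open>T \<in> interior pent\<close> u(1) \<open>0 < s\<close>] by simp
qed

lemma zero_in_interior_pent: "0 \<in> interior pent"
proof -
  have "(\<Sum>i\<in>UNIV. (1 / 5 :: real) *\<^sub>R corner i) \<in> interior pent"
    by (rule convex_combination_in_interior_pent[of _ l1 l2 l3]) (simp_all add: UNIV_lab)
  then show ?thesis
    by (simp add: scaleR_sum_right[symmetric] sum_corners)
qed

lemma diagonal_in_interior_pent:
  assumes "0 < a" "0 < b" "a + b = 1"
  shows "a *\<^sub>R corner p + b *\<^sub>R corner (nxt (nxt p)) \<in> interior pent"
proof -
  define k where "k = 2 * cos (2 * pi / 5)"
  have "0 < k"
    unfolding k_def using pi_gt_zero by (intro mult_pos_pos cos_gt_zero_pi) linarith+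
  have "k < 2"
    using cos_monotone_0_pi[of 0 "2 * pi / 5"] pi_gt_zero by (simp add: k_def)
  \<comment> \<open>With \<open>corner p + corner (p + 2) = k \<cdot> corner (p + 1)\<close>, the diagonal point is \<open>l \<cdot> y\<close> for a
      point \<open>y\<close> of the triangle on \<open>p, p + 1, p + 2\<close> and \<open>0 < l < 1\<close>; shrinking towards the
      interior point \<open>0\<close> lands in the interior.\<close>
  define m where "m = min a b"
  define l where "l = 1 - m * (2 - k)"
  have "0 < m" "m \<le> a" "m \<le> b"
    using assms by (auto simp: m_def)
  moreover have "0 < m * k" "0 < m * (2 - k)"
    using \<open>0 < m\<close> \<open>0 < k\<close> \<open>k < 2\<close> by simp_all
  ultimately have "0 < l" "l < 1"
    using assms by (simp_all add: l_def algebra_simps)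
  define y where "y = ((a - m) / l) *\<^sub>R corner p + (m * k / l) *\<^sub>R corner (nxt p) +
    ((b - m) / l) *\<^sub>R corner (nxt (nxt p))"
  have "0 \<le> (a - m) / l" "0 \<le> m * k / l" "0 \<le> (b - m) / l"
    using \<open>0 < l\<close> \<open>0 < m\<close> \<open>0 < k\<close> \<open>m \<le> a\<close> \<open>m \<le> b\<close> by simp_all
  moreover have "(a - m) + m * k + (b - m) = l"
    using assms(3) by (simp add: l_def algebra_simps)
  then have "(a - m) / l + m * k / l + (b - m) / l = 1"
    using \<open>0 < l\<close> by (simp add: add_divide_distrib[symmetric])
  ultimately have "y \<in> convex hull {corner p, corner (nxt p), corner (nxt (nxt p))}"
    unfolding convex_hull_3 y_def by blast
  then have "y \<in> pent"
    unfolding pent_def by (rule rev_subsetD) (intro hull_mono; auto)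
  have "a *\<^sub>R corner p + b *\<^sub>R corner (nxt (nxt p)) =
      (a - m) *\<^sub>R corner p + (m * k) *\<^sub>R corner (nxt p) + (b - m) *\<^sub>R corner (nxt (nxt p))"
    using corner_add_corner_nxt_nxt[of p] by (simp add: k_def algebra_simps flip: scaleR_add_right)
  also have "\<dots> = l *\<^sub>R y"
    using \<open>0 < l\<close> by (simp add: y_def scaleR_add_right)
  also have "\<dots> = y - (1 - l) *\<^sub>R (y - 0)"
    by (simp add: algebra_simps)
  also have "\<dots> \<in> interior pent"
    using \<open>0 < l\<close> \<open>l < 1\<close>
    by (intro mem_interior_convex_shrink convex_pent zero_in_interior_pent \<open>y \<in> pent\<close>) auto
  finally show ?thesis .
qed

lemma pent_boundary_in_edge:
  assumes "a \<in> pent" "a \<notin> interior pent"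
  obtains i where "a \<in> closed_segment (corner i) (corner (nxt i))"
proof -
  obtain \<mu> where nonneg: "\<forall>i. 0 \<le> \<mu> i" and sum1: "sum \<mu> UNIV = 1"
    and a: "a = (\<Sum>i\<in>UNIV. \<mu> i *\<^sub>R corner i)"
    using assms(1) unfolding pent_eq_convex_combinations by blast
  have not3: "\<not> (p \<noteq> q \<and> p \<noteq> r \<and> q \<noteq> r \<and> 0 < \<mu> p \<and> 0 < \<mu> q \<and> 0 < \<mu> r)" for p q r
    using convex_combination_in_interior_pent[OF nonneg sum1, of p q r] assms(2) a by blast
  obtain p where "0 < \<mu> p"
    using sum1 nonneg by (metis less_eq_real_def sum.neutral zero_neq_one)
  obtain q where "q \<noteq> p" and q: "0 < \<mu> q \<or> q = nxt p" and zero: "\<And>i. i \<notin> {p, q} \<Longrightarrow> \<mu> i = 0"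
  proof (cases "\<exists>q. q \<noteq> p \<and> 0 < \<mu> q")
    case True
    then obtain q where "q \<noteq> p" "0 < \<mu> q"
      by blast
    then show ?thesis
      using that[of q] not3[of p q] \<open>0 < \<mu> p\<close> nonneg by (metis insert_iff less_eq_real_def singletonI)
  next
    case False
    have "nxt p \<noteq> p"
      by (cases p) simp_all
    then show ?thesis
      using that[of "nxt p"] False nonneg by (metis insertCI less_eq_real_def)
  qed
  have "sum \<mu> UNIV = sum \<mu> {p, q}" "a = (\<Sum>i\<in>{p, q}. \<mu> i *\<^sub>R corner i)"
    unfolding a by (rule sum.mono_neutral_right; simp add: zero)+
  then have sum_pq: "\<mu> p + \<mu> q = 1" and a_pq: "a = \<mu> p *\<^sub>R corner p + \<mu> q *\<^sub>R corner q"
    using sum1 \<open>q \<noteq> p\<close> by simp_all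
  have segment: "u *\<^sub>R x + v *\<^sub>R y \<in> closed_segment x y" if "0 \<le> u" "0 \<le> v" "u + v = 1" for u v x y
    using that unfolding segment_convex_hull convex_hull_2 by blast
  consider "q = nxt p" | "p = nxt q" | "q = nxt (nxt p)" | "p = nxt (nxt q)"
    using lab_neq_cases \<open>q \<noteq> p\<close> by metis
  then show ?thesis
  proof cases
    case 1
    then show ?thesis
      using that[of p] segment nonneg sum_pq a_pq by metis
  next
    case 2
    then show ?thesis
      using that[of q] segment nonneg sum_pq a_pq by (metis add.commute)
  next
    case 3
    then have "0 < \<mu> q"
      using q by (cases p) auto
    then show ?thesis
      using diagonal_in_interior_pent[OF \<open>0 < \<mu> p\<close> _ sum_pq] 3 a_pq assms(2) by simp
  next
    case 4
    then have "0 < \<mu> q"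
      using q by (cases q) auto
    then show ?thesis
      using diagonal_in_interior_pent[of "\<mu> q" "\<mu> p" q] \<open>0 < \<mu> p\<close> 4 sum_pq a_pq assms(2)
      by (simp add: add.commute)
  qed
qed

section \<open>Faces of a tiling are connected through shared vertices\<close>

lemma closedin_Union_locally_finite_compact:
  fixes C :: "'i \<Rightarrow> 'a::metric_space set"
  assumes compact: "\<And>f. f \<in> L \<Longrightarrow> compact (C f)"
    and finite: "\<forall>x\<in>(\<Union>f\<in>L. C f). \<exists>e>0. finite {f\<in>L. C f \<inter> ball x e \<noteq> {}}"
    and "F \<subseteq> L"
  shows "closedin (top_of_set (\<Union>f\<in>L. C f)) (\<Union>f\<in>F. C f)"
proof (rule closedin_locally_finite_Union)
  fix S assume "S \<in> C ` F"
  then obtain f where "f \<in> L" "S = C f"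
    using \<open>F \<subseteq> L\<close> by blast
  then show "closedin (top_of_set (\<Union>f\<in>L. C f)) S"
    using compact by (intro closed_subset compact_imp_closed) auto
next
  show "locally_finite_in (top_of_set (\<Union>f\<in>L. C f)) (C ` F)"
    unfolding locally_finite_in_def topspace_euclidean_subtopology
  proof (intro conjI ballI)
    show "\<Union>(C ` F) \<subseteq> (\<Union>f\<in>L. C f)"
      using \<open>F \<subseteq> L\<close> by blast
    fix x assume x: "x \<in> (\<Union>f\<in>L. C f)"
    then obtain e where "e > 0" and fin: "finite {f\<in>L. C f \<inter> ball x e \<noteq> {}}"
      using finite by blast
    define V where "V = (\<Union>f\<in>L. C f) \<inter> ball x e"
    have "{S \<in> C ` F. S \<inter> V \<noteq> {}} \<subseteq> C ` {f\<in>L. C f \<inter> ball x e \<noteq> {}}"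
      using \<open>F \<subseteq> L\<close> by (auto simp: V_def)
    then have "finite {S \<in> C ` F. S \<inter> V \<noteq> {}}"
      using fin finite_subset by blast
    moreover have "openin (top_of_set (\<Union>f\<in>L. C f)) V" "x \<in> V"
      using x \<open>e > 0\<close> by (simp_all add: V_def openin_open_Int)
    ultimately show "\<exists>V. openin (top_of_set (\<Union>f\<in>L. C f)) V \<and> x \<in> V \<and> finite {S \<in> C ` F. S \<inter> V \<noteq> {}}"
      by blast
  qed
qed

lemma tiling_cells_meet_at_vertex:
  fixes pos :: "'v \<Rightarrow> complex" and \<psi> :: "'v face \<Rightarrow> complex \<Rightarrow> complex"
  assumes inj: "inj_on pos (verts L)"
    and corners: "\<forall>f\<in>L. \<forall>i. \<psi> f (corner i) = pos (f i)"
    and edges: "\<forall>f\<in>L. \<forall>g\<in>L. \<forall>i j. edge f i \<noteq> edge g j \<longrightarrow>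
      \<psi> f ` open_segment (corner i) (corner (nxt i)) \<inter> \<psi> g ` closed_segment (corner j) (corner (nxt j)) = {}"
    and interiors: "\<forall>f\<in>L. \<forall>g\<in>L. f \<noteq> g \<longrightarrow> \<psi> f ` interior pent \<inter> \<psi> g ` pent = {}"
    and f: "f \<in> L" "a \<in> pent" and g: "g \<in> L" "b \<in> pent" and meet: "\<psi> f a = \<psi> g b"
  shows "\<exists>i j. f i = g j"
proof (cases "f = g")
  case False
  have outside: "x \<notin> S" if "h x = k y" "y \<in> T" "h ` S \<inter> k ` T = {}"
    for h k :: "complex \<Rightarrow> complex" and x y S T
    using that by blast
  have "a \<notin> interior pent"
    using outside[where h = "\<psi> f" and k = "\<psi> g", OF meet g(2)] interiors f(1) g(1) False by simp
  moreover have "b \<notin> interior pent"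
    using outside[where h = "\<psi> g" and k = "\<psi> f", OF meet[symmetric] f(2)] interiors f(1) g(1) False by simp
  ultimately obtain i j where i: "a \<in> closed_segment (corner i) (corner (nxt i))"
    and j: "b \<in> closed_segment (corner j) (corner (nxt j))"
    using pent_boundary_in_edge f(2) g(2) by metis
  show ?thesis
  proof (cases "edge f i = edge g j")
    case True
    then have "f i \<in> {g j, g (nxt j)}"
      by (metis edge_def insertI1)
    then show ?thesis
      by blast
  next
    case False
    then have "a \<notin> open_segment (corner i) (corner (nxt i))"
      using outside[where h = "\<psi> f" and k = "\<psi> g", OF meet j] edges f(1) g(1) by simp
    moreover have "b \<notin> open_segment (corner j) (corner (nxt j))"
      using outside[where h = "\<psi> g" and k = "\<psi> f", OF meet[symmetric] i] edges f(1) g(1) False by (simp add: eq_commute)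
    ultimately obtain i' j' where "a = corner i'" "b = corner j'"
      using i j unfolding open_segment_def by blast
    then have "pos (f i') = pos (g j')"
      using corners f(1) g(1) meet by simp
    moreover have "f i' \<in> verts L" "g j' \<in> verts L"
      using f(1) g(1) by (auto simp: verts_def)
    ultimately show ?thesis
      using inj by (auto dest: inj_onD)
  qed
qed auto

definition share_vertex :: "'v face set \<Rightarrow> 'v face \<Rightarrow> 'v face \<Rightarrow> bool" where
  "share_vertex L f g \<longleftrightarrow> f \<in> L \<and> g \<in> L \<and> (\<exists>i j. f i = g j)"

lemma tiling_share_vertex_connected:
  assumes "tiling L" "f0 \<in> L" "g \<in> L"
  shows "(share_vertex L)\<^sup>*\<^sup>* f0 g"
proof -
  obtain pos :: "'a \<Rightarrow> complex" and \<psi> :: "'a face \<Rightarrow> complex \<Rightarrow> complex" where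
    inj: "inj_on pos (verts L)" and
    cells: "\<forall>f\<in>L. continuous_on pent (\<psi> f) \<and> inj_on (\<psi> f) pent \<and> (\<forall>i. \<psi> f (corner i) = pos (f i))" and
    edges: "\<forall>f\<in>L. \<forall>g\<in>L. \<forall>i j. edge f i \<noteq> edge g j \<longrightarrow>
      \<psi> f ` open_segment (corner i) (corner (nxt i)) \<inter> \<psi> g ` closed_segment (corner j) (corner (nxt j)) = {}" and
    interiors: "\<forall>f\<in>L. \<forall>g\<in>L. f \<noteq> g \<longrightarrow> \<psi> f ` interior pent \<inter> \<psi> g ` pent = {}" and
    disk: "(\<Union>f\<in>L. \<psi> f ` pent) homeomorphic ball (0::complex) 1" and
    finite: "\<forall>x\<in>(\<Union>f\<in>L. \<psi> f ` pent). \<exists>e>0. finite {f\<in>L. \<psi> f ` pent \<inter> ball x e \<noteq> {}}"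
    using assms(1) unfolding tiling_def by (elim exE conjE) blast
  \<comment> \<open>The cells reachable from \<open>f0\<close> and the remaining cells cover the connected disk by two
      closed sets (by local finiteness), which are disjoint because meeting cells share a vertex.\<close>
  define S where "S = {f\<in>L. (share_vertex L)\<^sup>*\<^sup>* f0 f}"
  have compact: "compact (\<psi> f ` pent)" if "f \<in> L" for f
    using cells that compact_pent by (intro compact_continuous_image) auto
  have "connected (\<Union>f\<in>L. \<psi> f ` pent)"
    using homeomorphic_connectedness[OF disk] by simp
  moreover have "closedin (top_of_set (\<Union>f\<in>L. \<psi> f ` pent)) (\<Union>f\<in>S. \<psi> f ` pent)"
    "closedin (top_of_set (\<Union>f\<in>L. \<psi> f ` pent)) (\<Union>f\<in>L - S. \<psi> f ` pent)"
    by (intro closedin_Union_locally_finite_compact compact finite; auto simp: S_def)+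
  moreover have "(\<Union>f\<in>S. \<psi> f ` pent) \<union> (\<Union>f\<in>L - S. \<psi> f ` pent) = (\<Union>f\<in>L. \<psi> f ` pent)"
    by (auto simp: S_def)
  moreover have "(\<Union>f\<in>S. \<psi> f ` pent) \<inter> (\<Union>f\<in>L - S. \<psi> f ` pent) = {}"
  proof (rule ccontr)
    assume "(\<Union>f\<in>S. \<psi> f ` pent) \<inter> (\<Union>f\<in>L - S. \<psi> f ` pent) \<noteq> {}"
    then obtain f a h b where "f \<in> S" "a \<in> pent" "h \<in> L" "h \<notin> S" "b \<in> pent" "\<psi> f a = \<psi> h b"
      by blast
    moreover have "\<forall>f\<in>L. \<forall>i. \<psi> f (corner i) = pos (f i)"
      using cells by blast
    ultimately have "\<exists>i j. f i = h j"
      using tiling_cells_meet_at_vertex[OF inj _ edges interiors] by (simp add: S_def)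
    then have "share_vertex L f h"
      using \<open>f \<in> S\<close> \<open>h \<in> L\<close> by (simp add: S_def share_vertex_def)
    then show False
      using \<open>f \<in> S\<close> \<open>h \<notin> S\<close> \<open>h \<in> L\<close> by (auto simp: S_def intro: rtranclp.rtrancl_into_rtrancl)
  qed
  moreover have "(\<Union>f\<in>S. \<psi> f ` pent) \<noteq> {}"
    using assms(2) corner_in_pent by (auto simp: S_def)
  ultimately have "(\<Union>f\<in>L - S. \<psi> f ` pent) = {}"
    unfolding connected_closedin_eq by blast
  then show ?thesis
    using assms(3) corner_in_pent by (auto simp: S_def)
qed

section \<open>Isomorphisms between subdivisions\<close>

abbreviation omega_petal :: "'v face \<Rightarrow> lab \<Rightarrow> 'v svert face" where
  "omega_petal \<equiv> petal Old Mid Cen"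

lemma mem_omega_iff:
  "F \<in> omega L \<longleftrightarrow> (\<exists>f\<in>L. F = (\<lambda>j. Cen f (prv j)) \<or> (\<exists>i. F = omega_petal f i))"
  unfolding omega_def omega_gen_def omega_face_gen_def by blast

lemma petal_self [simp]: "petal old mid cen f i i = old (f i)"
  by (simp add: petal_def)

lemma petal_nxt_nxt [simp]: "petal old mid cen f i (nxt (nxt i)) = cen f i"
  by (cases i) (simp_all add: petal_def)

lemma petal_nxt_prv [simp]: "petal old mid cen f (nxt i) (prv i) = cen f i"
  by (cases i) (simp_all add: petal_def)

lemma omega_face_Old:
  assumes "F \<in> omega L" "F j = Old y"
  obtains g where "g \<in> L" "F = omega_petal g j"
proof -
  obtain g i where "g \<in> L" "F = omega_petal g i"
    using assms unfolding mem_omega_iff by auto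
  moreover have "i = j"
    using assms(2) calculation(2) by (auto simp: petal_def split: if_splits)
  ultimately show ?thesis
    using that by blast
qed

lemma omega_face_Cen:
  assumes "F \<in> omega L" "F (prv j) = Cen g j"
  shows "F = omega_petal g (nxt j)"
proof -
  obtain g' where "g' \<in> L" "F = (\<lambda>j. Cen g' (prv j)) \<or> (\<exists>i. F = omega_petal g' i)"
    using assms(1) unfolding mem_omega_iff by blast
  moreover have "F \<noteq> (\<lambda>j. Cen g' (prv j))"
    using assms(2) by (cases j) auto
  ultimately obtain i where "F = omega_petal g' i"
    by blast
  moreover have "g' = g \<and> i = nxt j"
    using assms(2) calculation by (cases i; cases j) (simp_all add: petal_def)
  ultimately show ?thesis
    by simp
qed

lemma face_in_verts: "f \<in> L \<Longrightarrow> f k \<in> verts L"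
  by (auto simp: verts_def)

lemma Old_in_verts_omega:
  assumes "x \<in> verts L"
  shows "Old x \<in> verts (omega L)"
proof -
  obtain f k where "f \<in> L" "x = f k"
    using assms by (auto simp: verts_def)
  then have "omega_petal f k \<in> omega L" "omega_petal f k k = Old x"
    by (auto simp: mem_omega_iff)
  then show ?thesis
    by (metis face_in_verts)
qed

lemma omega_face_map_petals:
  assumes faces: "\<forall>F\<in>omega L. \<phi> \<circ> F \<in> omega L'" and "f \<in> L" and old: "\<phi> (Old (f j)) = Old y"
  obtains g where "g \<in> L'" "\<And>k. \<phi> \<circ> omega_petal f k = omega_petal g k"
proof -
  have petal_in: "omega_petal f k \<in> omega L" for k
    using \<open>f \<in> L\<close> by (auto simp: mem_omega_iff)
  obtain g where "g \<in> L'" and petal_j: "\<phi> \<circ> omega_petal f j = omega_petal g j"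
    using omega_face_Old[of "\<phi> \<circ> omega_petal f j" L' j y] faces petal_in old by auto
  have "\<phi> \<circ> omega_petal f k = omega_petal g k" for k
  proof (induction k rule: lab_nxt_induct[of _ j])
    case start
    show ?case
      by (rule petal_j)
  next
    case (step k)
    \<comment> \<open>Petals \<open>k\<close> and \<open>k + 1\<close> of \<open>f\<close> share the centre vertex \<open>c\<^sub>k\<close>.\<close>
    then have "(\<phi> \<circ> omega_petal f (nxt k)) (prv k) = Cen g k"
      using fun_cong[OF step, of "nxt (nxt k)"] by simp
    then show ?case
      using omega_face_Cen faces petal_in by blast
  qed
  then show ?thesis
    using that \<open>g \<in> L'\<close> by blast
qed

lemma omega_face_map_Old:
  assumes "tiling L" "v \<in> verts L" and faces: "\<forall>F\<in>omega L. \<phi> \<circ> F \<in> omega L'"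
    and "\<phi> (Old v) = Old v'"
  obtains \<psi> where "\<And>x. x \<in> verts L \<Longrightarrow> \<phi> (Old x) = Old (\<psi> x)" "\<forall>f\<in>L. \<psi> \<circ> f \<in> L'"
proof -
  obtain f0 j0 where "f0 \<in> L" "v = f0 j0"
    using assms(2) by (auto simp: verts_def)
  have corners: "\<exists>g\<in>L'. \<forall>k. \<phi> (Old (f k)) = Old (g k)" if "f \<in> L" for f
  proof -
    have "(share_vertex L)\<^sup>*\<^sup>* f0 f"
      using tiling_share_vertex_connected assms(1) \<open>f0 \<in> L\<close> that .
    then show ?thesis
    proof (induction rule: rtranclp_induct)
      case base
      then show ?case
        using omega_face_map_petals[OF faces \<open>f0 \<in> L\<close>] assms(4) \<open>v = f0 j0\<close>
        by (metis comp_apply petal_self)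
    next
      case (step f h)
      then obtain i j where "f i = h j" "h \<in> L"
        by (auto simp: share_vertex_def)
      then show ?case
        using omega_face_map_petals[OF faces \<open>h \<in> L\<close>] step.IH
        by (metis comp_apply petal_self)
    qed
  qed
  define \<psi> where "\<psi> x = (SOME y. \<phi> (Old x) = Old y)" for x
  have \<psi>: "\<phi> (Old x) = Old (\<psi> x)" if x: "x \<in> verts L" for x
  proof -
    obtain f k where "f \<in> L" "x = f k"
      using x by (auto simp: verts_def)
    then have "\<exists>y. \<phi> (Old x) = Old y"
      using corners by blast
    then show ?thesis
      unfolding \<psi>_def by (rule someI_ex)
  qed
  have "\<psi> \<circ> f \<in> L'" if "f \<in> L" for f
  proof -
    obtain g where "g \<in> L'" "\<forall>k. \<phi> (Old (f k)) = Old (g k)"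
      using corners \<open>f \<in> L\<close> by blast
    moreover have "\<forall>k. \<phi> (Old (f k)) = Old (\<psi> (f k))"
      using \<psi> face_in_verts \<open>f \<in> L\<close> by blast
    ultimately have "\<psi> \<circ> f = g"
      by auto
    then show ?thesis
      using \<open>g \<in> L'\<close> by simp
  qed
  then show ?thesis
    using that \<psi> by blast
qed

lemma face_map_verts:
  assumes "\<forall>f\<in>A. \<psi> \<circ> f \<in> B" "x \<in> verts A"
  shows "\<psi> x \<in> verts B"
  using assms by (auto simp: verts_def) (metis comp_apply rangeI)

lemma piso_obtain_inverse:
  assumes "piso A v B w" "v \<in> verts A"
  obtains \<phi> \<phi>' where "\<forall>F\<in>A. \<phi> \<circ> F \<in> B" "\<forall>G\<in>B. \<phi>' \<circ> G \<in> A" "\<phi> v = w" "\<phi>' w = v"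
    "\<And>x. x \<in> verts A \<Longrightarrow> \<phi>' (\<phi> x) = x" "\<And>y. y \<in> verts B \<Longrightarrow> \<phi> (\<phi>' y) = y"
proof -
  obtain \<phi> where bij: "bij_betw \<phi> (verts A) (verts B)" and faces: "(\<lambda>F. \<phi> \<circ> F) ` A = B"
    and "\<phi> v = w"
    using assms(1) unfolding piso_def by blast
  define \<phi>' where "\<phi>' = inv_into (verts A) \<phi>"
  have inv: "\<phi>' (\<phi> x) = x" if "x \<in> verts A" for x
    using bij that by (simp add: \<phi>'_def bij_betw_inv_into_left)
  have inv': "\<phi> (\<phi>' y) = y" if "y \<in> verts B" for y
    using bij that by (simp add: \<phi>'_def bij_betw_inv_into_right)
  have "\<phi>' \<circ> G \<in> A" if "G \<in> B" for G
  proof -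
    obtain F where "F \<in> A" "G = \<phi> \<circ> F"
      using faces \<open>G \<in> B\<close> by blast
    moreover have "\<phi>' \<circ> (\<phi> \<circ> F) = F"
      using inv face_in_verts \<open>F \<in> A\<close> by (auto simp: fun_eq_iff)
    ultimately show ?thesis
      by simp
  qed
  then show ?thesis
    using that[of \<phi> \<phi>'] faces inv inv' \<open>\<phi> v = w\<close> assms(2) by blast
qed

lemma piso_if_inverse_face_maps:
  assumes "\<forall>f\<in>A. \<psi> \<circ> f \<in> B" "\<forall>g\<in>B. \<psi>' \<circ> g \<in> A"
    and "\<And>x. x \<in> verts A \<Longrightarrow> \<psi>' (\<psi> x) = x" "\<And>y. y \<in> verts B \<Longrightarrow> \<psi> (\<psi>' y) = y"
    and "\<psi> v = w"
  shows "piso A v B w"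
  unfolding piso_def
proof (intro exI conjI)
  show "bij_betw \<psi> (verts A) (verts B)"
    using assms face_map_verts[OF assms(1)] face_map_verts[OF assms(2)]
    by (intro bij_betw_byWitness[where f' = \<psi>']) auto
  have "g = \<psi> \<circ> (\<psi>' \<circ> g)" if "g \<in> B" for g
    using assms(4)[OF face_in_verts[OF that]] by (simp add: fun_eq_iff)
  then show "(\<lambda>f. \<psi> \<circ> f) ` A = B"
    using assms(1,2) by blast
qed (rule assms(5))

theorem mainTheorem7:
  fixes L :: "'a face set" and v :: 'a and L' :: "'b face set" and v' :: 'b
  assumes "in_Xi L v" and "in_Xi L' v'"
    and "piso (omega L) (Old v) (omega L') (Old v')"
  shows "piso L v L' v'"
proof -
  have L: "tiling L" "v \<in> verts L" and L': "tiling L'" "v' \<in> verts L'"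
    using assms(1,2) by (auto simp: in_Xi_def)
  obtain \<phi> \<phi>' where \<phi>: "\<forall>F\<in>omega L. \<phi> \<circ> F \<in> omega L'" "\<phi> (Old v) = Old v'"
    and \<phi>': "\<forall>G\<in>omega L'. \<phi>' \<circ> G \<in> omega L" "\<phi>' (Old v') = Old v"
    and inverse: "\<And>x. x \<in> verts (omega L) \<Longrightarrow> \<phi>' (\<phi> x) = x"
      "\<And>y. y \<in> verts (omega L') \<Longrightarrow> \<phi> (\<phi>' y) = y"
    using piso_obtain_inverse[OF assms(3) Old_in_verts_omega[OF L(2)]] by metis
  obtain \<psi> where \<psi>: "\<And>x. x \<in> verts L \<Longrightarrow> \<phi> (Old x) = Old (\<psi> x)" and \<psi>_faces: "\<forall>f\<in>L. \<psi> \<circ> f \<in> L'"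
    using omega_face_map_Old[OF L \<phi>] by blast
  obtain \<psi>' where \<psi>': "\<And>y. y \<in> verts L' \<Longrightarrow> \<phi>' (Old y) = Old (\<psi>' y)" and \<psi>'_faces: "\<forall>g\<in>L'. \<psi>' \<circ> g \<in> L"
    using omega_face_map_Old[OF L' \<phi>'] by blast
  have "\<psi>' (\<psi> x) = x" if "x \<in> verts L" for x
    using \<psi>[OF that] \<psi>'[OF face_map_verts[OF \<psi>_faces that]] inverse(1)[OF Old_in_verts_omega[OF that]]
    by simp
  moreover have "\<psi> (\<psi>' y) = y" if "y \<in> verts L'" for y
    using \<psi>'[OF that] \<psi>[OF face_map_verts[OF \<psi>'_faces that]] inverse(2)[OF Old_in_verts_omega[OF that]]
    by simp
  moreover have "\<psi> v = v'"
    using \<psi>[OF L(2)] \<phi>(2) by simp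
  ultimately show ?thesis
    by (rule piso_if_inverse_face_maps[OF \<psi>_faces \<psi>'_faces])
qed

end
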